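(* Let $T>0$, $a,f\in C^1([0,T])$ with $a(t)\ge\alpha>0$ on $[0,T]$. For $0<\varepsilon\le1$ let $u_\varepsilon$ be the solution of $\varepsilon u_\varepsilon'+au_\varepsilon=f$ on $(0,T]$ with initial value $u_\varepsilon(0)$, where $|u_\varepsilon(0)|\le K$ with $K$ independent of $\varepsilon$. For each $N\ge1$ let $0=t_0<t_1<\dots<t_N=T$ be a (possibly non-uniform) mesh $\Omega^N$ with $h_j=t_j-t_{j-1}\le C_0N^{-1}$ for all $1\le j\le N$, where $C_0$ is independent of $N$. Let $U^N_\varepsilon=(U_j)_{j=0}^N$ be the solution of the fitted backward Euler scheme $$\varepsilon\sigma_j\frac{U_j-U_{j-1}}{h_j}+a_jU_j=f(t_j),\quad 1\le j\le N,\qquad U_0=u_\varepsilon(0),$$ where $a_j=a(t_j)$, $\rho_j=h_j/\varepsilon$ and $\sigma_j=\dfrac{a_j\rho_j}{e^{a_j\rho_j}-1}$. Then there is a constant $C$, independent of $\varepsilon$ and $N$, such that for all $N\ge1$ $$\sup_{0<\varepsilon\le1}\ \max_{0\le j\le N}|U_j-u_\varepsilon(t_j)|\le CN^{-1}.$$ *)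

theory Defs
  imports "HOL-Analysis.Analysis"
begin

definition C1_on_interval :: "real \<Rightarrow> real \<Rightarrow> (real \<Rightarrow> real) \<Rightarrow> bool" where
  "C1_on_interval lo hi g \<longleftrightarrow>
     (\<exists>g'. (\<forall>t\<in>{lo..hi}. (g has_real_derivative g' t) (at t within {lo..hi}))
           \<and> continuous_on {lo..hi} g')"

definition fitted_sigma :: "real \<Rightarrow> real \<Rightarrow> real \<Rightarrow> real" where
  "fitted_sigma eps aj hj = (let r = hj / eps in aj * r / (exp (aj * r) - 1))"

end

theory Submission
  imports Defs
begin

text \<open>On a mesh interval with right endpoint \<open>t\<^sub>j\<close>, the fitted scheme is the exact solution
operator of the frozen equation \<open>\<epsilon> v' + a(t\<^sub>j) v = f(t\<^sub>j)\<close>: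
\<open>U\<^sub>j = q\<^sub>j U\<^sub>j\<^sub>-\<^sub>1 + (1 - q\<^sub>j) f(t\<^sub>j)/a(t\<^sub>j)\<close> with \<open>q\<^sub>j = exp (- a(t\<^sub>j) h\<^sub>j / \<epsilon>)\<close>.
The true solution satisfies the frozen equation up to a defect of size
\<open>(Lip f + Lip a \<cdot> sup |u\<^sub>\<epsilon>|) h\<^sub>j\<close>, and an integrating-factor comparison shows that this
defect causes a local error of at most \<open>(1 - q\<^sub>j)\<close> times defect\<open>/\<alpha>\<close>. A maximum principle
bounds \<open>sup |u\<^sub>\<epsilon>|\<close> uniformly in \<open>\<epsilon>\<close>, so the errors satisfy
\<open>e\<^sub>j \<le> q\<^sub>j e\<^sub>j\<^sub>-\<^sub>1 + (1 - q\<^sub>j) C/N\<close> with \<open>e\<^sub>0 = 0\<close>, a convex combination that never exceeds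
\<open>C/N\<close>. The factor \<open>1 - q\<^sub>j\<close> is what makes the bound independent of \<open>\<epsilon>\<close>.\<close>

lemma fitted_euler_step_eq:
  fixes \<epsilon> b h X Y F :: real
  assumes "\<epsilon> > 0" "b > 0" "h > 0"
    and "\<epsilon> * fitted_sigma \<epsilon> b h * (X - Y) / h + b * X = F"
  shows "X = exp (- (b * h / \<epsilon>)) * Y + (1 - exp (- (b * h / \<epsilon>))) * (F / b)"
proof -
  define E where "E = exp (b * h / \<epsilon>)"
  have E_gt_1: "E > 1"
    using assms(1-3) by (simp add: E_def)
  have "\<epsilon> * fitted_sigma \<epsilon> b h / h = b / (E - 1)"
    using assms(1-3) E_gt_1 by (simp add: fitted_sigma_def Let_def E_def field_simps)
  then have "b / (E - 1) * (X - Y) + b * X = F"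
    using assms(4) by (metis times_divide_eq_left mult.commute)
  then have "E * X = Y + (E - 1) * (F / b)"
    using E_gt_1 assms(2) by (simp add: field_simps)
  then have "X = Y / E + (1 - 1 / E) * (F / b)"
    using E_gt_1 assms(2) by (simp add: field_simps)
  moreover have "exp (- (b * h / \<epsilon>)) = 1 / E"
    by (simp add: E_def exp_minus field_simps)
  ultimately show ?thesis
    by simp
qed

text \<open>With the integrating factor \<open>E(t) = exp (b (t - l) / \<epsilon>)\<close>, the function
\<open>w = E \<cdot> (y - c/b)\<close> has \<open>w' = E/\<epsilon> \<cdot> (\<epsilon> y' + b y - c)\<close>, so \<open>|w'|\<close> is dominated by the
derivative of \<open>\<phi> = M/b \<cdot> (E - 1)\<close>, and \<open>\<phi> \<plusminus> w\<close> are nondecreasing.\<close>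

lemma frozen_ode_defect_bound:
  fixes y :: "real \<Rightarrow> real" and l r \<epsilon> b c M :: real
  assumes "l < r" "\<epsilon> > 0" "b > 0" and cont: "continuous_on {l..r} y"
    and defect: "\<forall>t\<in>{l<..<r}. \<exists>D. (y has_real_derivative D) (at t) \<and> \<bar>\<epsilon> * D + b * y t - c\<bar> \<le> M"
  shows "\<bar>y r - exp (- (b * (r - l) / \<epsilon>)) * y l - (1 - exp (- (b * (r - l) / \<epsilon>))) * (c / b)\<bar>
           \<le> M / b * (1 - exp (- (b * (r - l) / \<epsilon>)))"
proof -
  define E where "E t = exp (b * (t - l) / \<epsilon>)" for t
  define w where "w t = E t * (y t - c / b) - (y l - c / b)" for t
  define \<phi> where "\<phi> t = M / b * (E t - 1)" for t
  have E_deriv: "(E has_real_derivative E t * (b / \<epsilon>)) (at t)" for t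
    unfolding E_def using \<open>\<epsilon> > 0\<close> by (auto intro!: derivative_eq_intros)
  have E_cont: "continuous_on {l..r} E"
    unfolding E_def using \<open>\<epsilon> > 0\<close> by (intro continuous_intros) auto
  have monotone: "\<phi> l + s * w l \<le> \<phi> r + s * w r" if s: "s = 1 \<or> s = -1" for s
  proof (rule DERIV_nonneg_imp_increasing_open[OF less_imp_le[OF \<open>l < r\<close>]])
    fix t assume "l < t" "t < r"
    then obtain D where D: "(y has_real_derivative D) (at t)" and bound: "\<bar>\<epsilon> * D + b * y t - c\<bar> \<le> M"
      using defect by (meson greaterThanLessThan_iff)
    have "((\<lambda>t. \<phi> t + s * w t) has_real_derivative
            M / b * (E t * (b / \<epsilon>)) + s * (E t * (b / \<epsilon>) * (y t - c / b) + E t * D)) (at t)"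
      unfolding \<phi>_def w_def by (rule derivative_eq_intros E_deriv D refl)+ (simp add: algebra_simps)
    moreover have "M / b * (E t * (b / \<epsilon>)) + s * (E t * (b / \<epsilon>) * (y t - c / b) + E t * D)
        = E t / \<epsilon> * (M + s * (\<epsilon> * D + b * y t - c))"
      using \<open>\<epsilon> > 0\<close> \<open>b > 0\<close> by (simp add: field_simps)
    moreover have "M + s * (\<epsilon> * D + b * y t - c) \<ge> 0"
      using s bound by auto
    moreover have "E t > 0"
      by (simp add: E_def)
    ultimately show "\<exists>D'. ((\<lambda>t. \<phi> t + s * w t) has_real_derivative D') (at t) \<and> D' \<ge> 0"
      using \<open>\<epsilon> > 0\<close> by auto
  next
    show "continuous_on {l..r} (\<lambda>t. \<phi> t + s * w t)"
      unfolding \<phi>_def w_def using cont E_cont by (intro continuous_intros)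
  qed
  have "\<phi> l = 0" "w l = 0"
    by (simp_all add: \<phi>_def w_def E_def)
  then have w_le: "\<bar>w r\<bar> \<le> \<phi> r"
    using monotone[of 1] monotone[of "-1"] by auto
  define q where "q = exp (- (b * (r - l) / \<epsilon>))"
  have qE: "q * E r = 1"
    by (simp add: q_def E_def flip: exp_add)
  have "q * w r = (q * E r) * (y r - c / b) - q * (y l - c / b)"
    unfolding w_def by (simp add: algebra_simps)
  also have "\<dots> = y r - q * y l - (1 - q) * (c / b)"
    using qE by (simp add: algebra_simps add_divide_distrib[symmetric])
  finally have "q * w r = y r - q * y l - (1 - q) * (c / b)" .
  moreover have "q * \<phi> r = M / b * (1 - q)"
    unfolding \<phi>_def using qE by (simp add: algebra_simps add_divide_distrib[symmetric])
  moreover have "\<bar>q * w r\<bar> \<le> q * \<phi> r"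
    using w_le by (simp add: abs_mult q_def)
  ultimately show ?thesis
    by (simp add: q_def)
qed

lemma C1_on_interval_continuous_on:
  assumes "C1_on_interval lo hi g"
  shows "continuous_on {lo..hi} g"
proof -
  obtain g' where "\<forall>t\<in>{lo..hi}. (g has_real_derivative g' t) (at t within {lo..hi})"
    using assms unfolding C1_on_interval_def by blast
  then show ?thesis
    unfolding continuous_on_eq_continuous_within using DERIV_continuous by blast
qed

lemma C1_on_interval_lipschitz_on:
  assumes "C1_on_interval lo hi g"
  obtains L where "L-lipschitz_on {lo..hi} g"
proof -
  obtain g' where deriv: "\<forall>t\<in>{lo..hi}. (g has_real_derivative g' t) (at t within {lo..hi})"
    and "continuous_on {lo..hi} g'"
    using assms unfolding C1_on_interval_def by blast
  then obtain L where "L \<ge> 0" and L: "\<And>t. t \<in> {lo..hi} \<Longrightarrow> norm (g' t) \<le> L"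
    using continuous_on_compact_bound[OF compact_Icc] by blast
  have "dist (g s) (g t) \<le> L * dist s t" if "s \<in> {lo..hi}" "t \<in> {lo..hi}" for s t
    using field_differentiable_bound[where S = "{lo..hi}" and f = g and f' = g',
        OF convex_real_interval(5) _ L that] deriv
    by (auto simp: dist_real_def)
  with \<open>L \<ge> 0\<close> show ?thesis
    by (intro that lipschitz_onI)
qed

lemma le_of_deriv_neg_above:
  fixes y :: "real \<Rightarrow> real" and T B :: real
  assumes "0 \<le> T" and cont: "continuous_on {0..T} y" and "y 0 \<le> B"
    and deriv_neg: "\<forall>t\<in>{0<..T}. y t > B \<longrightarrow> (\<exists>D<0. (y has_real_derivative D) (at t within {0..T}))"
    and "t \<in> {0..T}"
  shows "y t \<le> B"
proof (rule ccontr)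
  assume "\<not> y t \<le> B"
  obtain m where m: "m \<in> {0..T}" "\<forall>s\<in>{0..T}. y s \<le> y m"
    using continuous_attains_sup[OF compact_Icc _ cont] \<open>0 \<le> T\<close> by auto
  have "y m > B"
    using m \<open>t \<in> {0..T}\<close> \<open>\<not> y t \<le> B\<close> by force
  then have "m > 0"
    using \<open>y 0 \<le> B\<close> m(1) by (cases "m = 0") auto
  then obtain D where "D < 0" "(y has_real_derivative D) (at m within {0..T})"
    using deriv_neg \<open>y m > B\<close> m(1) by auto
  then obtain d where d: "d > 0" "\<forall>h>0. m - h \<in> {0..T} \<longrightarrow> h < d \<longrightarrow> y m < y (m - h)"
    using has_real_derivative_neg_dec_left by blast
  define h where "h = min (d / 2) m"
  have "m - h \<in> {0..T}" "y m < y (m - h)"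
    using d \<open>m > 0\<close> m(1) by (auto simp: h_def)
  with m(2) show False
    by fastforce
qed

text \<open>The nonnegativity of \<open>B\<close> is needed to pass from \<open>a t \<ge> \<alpha>\<close> to \<open>a t \<cdot> y t \<ge> \<alpha> \<cdot> y t\<close>
where \<open>y t > B\<close>.\<close>

lemma singular_ode_solution_le:
  fixes y a f :: "real \<Rightarrow> real" and \<epsilon> \<alpha> B T :: real
  assumes "\<epsilon> > 0" "\<alpha> > 0" "0 \<le> T" "0 \<le> B"
    and "continuous_on {0..T} y"
    and ode: "\<forall>t\<in>{0<..T}. \<exists>D. (y has_real_derivative D) (at t within {0..T}) \<and> \<epsilon> * D + a t * y t = f t"
    and a_ge: "\<forall>t\<in>{0<..T}. \<alpha> \<le> a t"
    and f_le: "\<forall>t\<in>{0<..T}. f t \<le> \<alpha> * B"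
    and "y 0 \<le> B" "t \<in> {0..T}"
  shows "y t \<le> B"
proof (rule le_of_deriv_neg_above[OF assms(3,5,9) _ assms(10)], intro ballI impI)
  fix t assume t: "t \<in> {0<..T}" and "y t > B"
  obtain D where D: "(y has_real_derivative D) (at t within {0..T})" "\<epsilon> * D + a t * y t = f t"
    using ode t by blast
  have "\<alpha> * y t \<le> a t * y t"
    using a_ge t \<open>y t > B\<close> \<open>0 \<le> B\<close> by (intro mult_right_mono) auto
  moreover have "\<alpha> * B < \<alpha> * y t"
    using \<open>\<alpha> > 0\<close> \<open>y t > B\<close> by simp
  ultimately have "\<epsilon> * D < 0"
    using D(2) f_le t by fastforce
  with \<open>\<epsilon> > 0\<close> D(1) show "\<exists>D<0. (y has_real_derivative D) (at t within {0..T})"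
    by (auto simp: mult_less_0_iff)
qed

lemma singular_ode_solution_abs_le:
  fixes y a f :: "real \<Rightarrow> real" and \<epsilon> \<alpha> K Mf T :: real
  assumes "\<epsilon> > 0" "\<alpha> > 0" "0 \<le> T"
    and cont: "continuous_on {0..T} y"
    and ode: "\<forall>t\<in>{0<..T}. \<exists>D. (y has_real_derivative D) (at t within {0..T}) \<and> \<epsilon> * D + a t * y t = f t"
    and a_ge: "\<forall>t\<in>{0<..T}. \<alpha> \<le> a t"
    and f_le: "\<forall>t\<in>{0<..T}. \<bar>f t\<bar> \<le> Mf"
    and y0: "\<bar>y 0\<bar> \<le> K" and "t \<in> {0..T}"
  shows "\<bar>y t\<bar> \<le> max K (Mf / \<alpha>)"
proof -
  define B where "B = max K (Mf / \<alpha>)"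
  have "0 \<le> B" "\<bar>y 0\<bar> \<le> B"
    using y0 by (auto simp: B_def le_max_iff_disj)
  have "Mf \<le> \<alpha> * B"
    using \<open>\<alpha> > 0\<close> by (simp add: B_def field_simps max_def)
  with f_le have f_le_B: "\<forall>t\<in>{0<..T}. \<bar>f t\<bar> \<le> \<alpha> * B"
    by fastforce
  have "y t \<le> B"
    using singular_ode_solution_le[OF assms(1-3) \<open>0 \<le> B\<close> cont ode a_ge] f_le_B \<open>\<bar>y 0\<bar> \<le> B\<close> \<open>t \<in> {0..T}\<close>
    by fastforce
  moreover have "- y t \<le> B"
  proof (rule singular_ode_solution_le[where y = "\<lambda>s. - y s" and f = "\<lambda>s. - f s", OF assms(1-3) \<open>0 \<le> B\<close> _ _ a_ge])
    show "continuous_on {0..T} (\<lambda>t. - y t)"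
      using cont by (intro continuous_intros)
    show "\<forall>t\<in>{0<..T}. \<exists>D. ((\<lambda>t. - y t) has_real_derivative D) (at t within {0..T})
            \<and> \<epsilon> * D + a t * - y t = - f t"
      using ode by (metis DERIV_minus mult_minus_right minus_add_distrib)
  qed (use f_le_B \<open>\<bar>y 0\<bar> \<le> B\<close> \<open>t \<in> {0..T}\<close> in fastforce)+
  ultimately show ?thesis
    by (simp add: B_def abs_le_iff)
qed

lemma mesh_point_mem:
  fixes x :: "nat \<Rightarrow> real"
  assumes "x 0 = 0" "x N = T" and incr: "\<forall>j\<in>{1..N}. x (j - 1) < x j" and "j \<le> N"
  shows "x j \<in> {0..T}"
proof -
  have "x i \<le> x k" if "i \<le> k" "k \<le> N" for i k
  proof (rule lift_Suc_mono_le_ivl[where N = "{..<N}"])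
    show "x n \<le> x (Suc n)" if "n \<in> {..<N}" for n
      using incr[rule_format, of "Suc n"] that by auto
  qed (use that in auto)
  from this[of 0 j] this[of j N] show ?thesis
    using assms by auto
qed

lemma le_of_convex_recursion:
  fixes e :: "nat \<Rightarrow> real"
  assumes "e 0 \<le> E" and "\<forall>j<n. \<exists>q\<in>{0..1}. e (Suc j) \<le> q * e j + (1 - q) * E"
  shows "e n \<le> E"
  using assms(2)
proof (induction n)
  case 0
  with assms(1) show ?case by simp
next
  case (Suc n)
  then obtain q where "q \<in> {0..1}" "e (Suc n) \<le> q * e n + (1 - q) * E"
    by auto
  moreover have "q * e n \<le> q * E"
    using Suc \<open>q \<in> {0..1}\<close> by (intro mult_left_mono) auto
  ultimately show ?case
    by (simp add: algebra_simps)
qed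

lemma frozen_coefficient_defect:
  fixes y a f :: "real \<Rightarrow> real" and \<epsilon> B T La Lf l r t :: real
  assumes La: "La-lipschitz_on {0..T} a" and Lf: "Lf-lipschitz_on {0..T} f"
    and y_le: "\<forall>t\<in>{0..T}. \<bar>y t\<bar> \<le> B"
    and ode: "\<forall>t\<in>{0<..T}. \<exists>D. (y has_real_derivative D) (at t within {0..T}) \<and> \<epsilon> * D + a t * y t = f t"
    and "0 \<le> l" "r \<le> T" and t: "t \<in> {l<..<r}"
  shows "\<exists>D. (y has_real_derivative D) (at t) \<and> \<bar>\<epsilon> * D + a r * y t - f r\<bar> \<le> (Lf + La * B) * (r - l)"
proof -
  have "t \<in> {0..T}" "r \<in> {0..T}" "t \<in> {0<..T}" "t \<in> interior {0..T}"
    using t \<open>0 \<le> l\<close> \<open>r \<le> T\<close> by auto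
  then obtain D where "(y has_real_derivative D) (at t within {0..T})" "\<epsilon> * D + a t * y t = f t"
    using ode by blast
  then have D: "(y has_real_derivative D) (at t)" "\<epsilon> * D + a t * y t = f t"
    using at_within_interior[OF \<open>t \<in> interior {0..T}\<close>] by simp_all
  have "0 \<le> La" "0 \<le> Lf"
    using lipschitz_on_nonneg[OF La] lipschitz_on_nonneg[OF Lf] .
  have "\<bar>f t - f r\<bar> \<le> Lf * \<bar>t - r\<bar>"
    using lipschitz_onD[OF Lf \<open>t \<in> {0..T}\<close> \<open>r \<in> {0..T}\<close>] by (simp add: dist_real_def)
  also have "\<dots> \<le> Lf * (r - l)"
    using t \<open>0 \<le> Lf\<close> by (intro mult_left_mono) auto
  finally have f_diff: "\<bar>f t - f r\<bar> \<le> Lf * (r - l)" .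
  have "\<bar>a r - a t\<bar> \<le> La * \<bar>r - t\<bar>"
    using lipschitz_onD[OF La \<open>r \<in> {0..T}\<close> \<open>t \<in> {0..T}\<close>] by (simp add: dist_real_def)
  also have "\<dots> \<le> La * (r - l)"
    using t \<open>0 \<le> La\<close> by (intro mult_left_mono) auto
  finally have "\<bar>(a r - a t) * y t\<bar> \<le> La * (r - l) * B"
    unfolding abs_mult using y_le \<open>t \<in> {0..T}\<close> by (intro mult_mono) auto
  moreover note f_diff
  moreover have "\<epsilon> * D + a r * y t - f r = (f t - f r) + (a r - a t) * y t"
    using D(2) by (simp add: algebra_simps)
  ultimately show ?thesis
    using D(1) by (auto simp: algebra_simps)
qed

lemma fitted_euler_local_error:
  fixes y a f :: "real \<Rightarrow> real" and \<epsilon> \<alpha> B T La Lf l r h X Y :: real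
  assumes "\<epsilon> > 0" "\<alpha> > 0"
    and a_ge: "\<forall>t\<in>{0..T}. \<alpha> \<le> a t"
    and La: "La-lipschitz_on {0..T} a" and Lf: "Lf-lipschitz_on {0..T} f"
    and y_le: "\<forall>t\<in>{0..T}. \<bar>y t\<bar> \<le> B"
    and cont: "continuous_on {0..T} y"
    and ode: "\<forall>t\<in>{0<..T}. \<exists>D. (y has_real_derivative D) (at t within {0..T}) \<and> \<epsilon> * D + a t * y t = f t"
    and "0 \<le> l" "l < r" "r \<le> T" "r - l \<le> h"
    and scheme: "\<epsilon> * fitted_sigma \<epsilon> (a r) (r - l) * (X - Y) / (r - l) + a r * X = f r"
  shows "\<exists>q\<in>{0..1}. \<bar>X - y r\<bar> \<le> q * \<bar>Y - y l\<bar> + (1 - q) * ((Lf + La * B) * h / \<alpha>)"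
proof -
  define b where "b = a r"
  define q where "q = exp (- (b * (r - l) / \<epsilon>))"
  define M where "M = (Lf + La * B) * (r - l)"
  have "\<alpha> \<le> b"
    using a_ge \<open>0 \<le> l\<close> \<open>l < r\<close> \<open>r \<le> T\<close> by (simp add: b_def)
  with \<open>\<alpha> > 0\<close> have "b > 0"
    by linarith
  have "0 \<le> B" "0 \<le> La" "0 \<le> Lf"
    using y_le \<open>0 \<le> l\<close> \<open>l < r\<close> \<open>r \<le> T\<close> lipschitz_on_nonneg[OF La] lipschitz_on_nonneg[OF Lf]
    by (auto dest!: bspec[of _ _ 0])
  have q: "0 < q" "q \<le> 1"
    using \<open>b > 0\<close> \<open>l < r\<close> \<open>\<epsilon> > 0\<close> by (auto simp: q_def)
  have X: "X = q * Y + (1 - q) * (f r / b)"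
    using fitted_euler_step_eq[OF \<open>\<epsilon> > 0\<close> \<open>b > 0\<close> _ scheme[folded b_def]] \<open>l < r\<close>
    by (simp add: q_def)
  have "\<forall>t\<in>{l<..<r}. \<exists>D. (y has_real_derivative D) (at t) \<and> \<bar>\<epsilon> * D + b * y t - f r\<bar> \<le> M"
    unfolding b_def M_def using frozen_coefficient_defect[OF La Lf y_le ode \<open>0 \<le> l\<close> \<open>r \<le> T\<close>] by blast
  moreover have "continuous_on {l..r} y"
    by (rule continuous_on_subset[OF cont]) (use \<open>0 \<le> l\<close> \<open>r \<le> T\<close> in auto)
  ultimately have local: "\<bar>y r - q * y l - (1 - q) * (f r / b)\<bar> \<le> M / b * (1 - q)"
    using frozen_ode_defect_bound[OF \<open>l < r\<close> \<open>\<epsilon> > 0\<close> \<open>b > 0\<close>] by (simp add: q_def)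
  have "M / b \<le> (Lf + La * B) * h / \<alpha>"
  proof -
    have "M / b \<le> M / \<alpha>"
      using \<open>\<alpha> \<le> b\<close> \<open>\<alpha> > 0\<close> \<open>0 \<le> B\<close> \<open>0 \<le> La\<close> \<open>0 \<le> Lf\<close> \<open>l < r\<close>
      by (intro divide_left_mono) (auto simp: M_def)
    also have "\<dots> \<le> (Lf + La * B) * h / \<alpha>"
      unfolding M_def using \<open>r - l \<le> h\<close> \<open>\<alpha> > 0\<close> \<open>0 \<le> B\<close> \<open>0 \<le> La\<close> \<open>0 \<le> Lf\<close>
      by (intro divide_right_mono mult_left_mono) auto
    finally show ?thesis .
  qed
  then have defect_le: "M / b * (1 - q) \<le> (1 - q) * ((Lf + La * B) * h / \<alpha>)"
    using q by (subst mult.commute) (intro mult_left_mono; simp)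
  have "\<bar>X - y r\<bar> \<le> \<bar>q * (Y - y l)\<bar> + \<bar>y r - q * y l - (1 - q) * (f r / b)\<bar>"
    unfolding X by (rule order_trans[OF _ abs_triangle_ineq4]) (simp add: algebra_simps)
  also have "\<dots> \<le> q * \<bar>Y - y l\<bar> + (1 - q) * ((Lf + La * B) * h / \<alpha>)"
    using local defect_le q by (simp add: abs_mult)
  finally show ?thesis
    using q by auto
qed

lemma fitted_euler_error_bound:
  fixes y a f :: "real \<Rightarrow> real" and x U :: "nat \<Rightarrow> real" and \<epsilon> \<alpha> B T La Lf h :: real
  assumes "\<epsilon> > 0" "\<alpha> > 0"
    and a_ge: "\<forall>t\<in>{0..T}. \<alpha> \<le> a t"
    and La: "La-lipschitz_on {0..T} a" and Lf: "Lf-lipschitz_on {0..T} f"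
    and y_le: "\<forall>t\<in>{0..T}. \<bar>y t\<bar> \<le> B"
    and cont: "continuous_on {0..T} y"
    and ode: "\<forall>t\<in>{0<..T}. \<exists>D. (y has_real_derivative D) (at t within {0..T}) \<and> \<epsilon> * D + a t * y t = f t"
    and "0 < N" "x 0 = 0" "x N = T"
    and incr: "\<forall>j\<in>{1..N}. x (j - 1) < x j"
    and step: "\<forall>j\<in>{1..N}. x j - x (j - 1) \<le> h"
    and "U 0 = y 0"
    and scheme: "\<forall>j\<in>{1..N}. \<epsilon> * fitted_sigma \<epsilon> (a (x j)) (x j - x (j - 1)) * (U j - U (j - 1))
                               / (x j - x (j - 1)) + a (x j) * U j = f (x j)"
    and "j \<le> N"
  shows "\<bar>U j - y (x j)\<bar> \<le> (Lf + La * B) * h / \<alpha>"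
proof -
  define E where "E = (Lf + La * B) * h / \<alpha>"
  define e where "e k = \<bar>U k - y (x k)\<bar>" for k
  have mem: "x i \<in> {0..T}" if "i \<le> N" for i
    using mesh_point_mem[OF \<open>x 0 = 0\<close> \<open>x N = T\<close> incr that] .
  have "e j \<le> E"
  proof (rule le_of_convex_recursion)
    have "x 0 < x 1" "x 1 - x 0 \<le> h" "x 1 \<in> {0..T}"
      using incr[rule_format, of 1] step[rule_format, of 1] mem[of 1] \<open>0 < N\<close> by auto
    then have "0 \<le> B" "0 \<le> La" "0 \<le> Lf" "0 \<le> h"
      using y_le lipschitz_on_nonneg[OF La] lipschitz_on_nonneg[OF Lf] \<open>x 0 = 0\<close> by force+
    with \<open>U 0 = y 0\<close> \<open>x 0 = 0\<close> \<open>\<alpha> > 0\<close> show "e 0 \<le> E"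
      by (simp add: e_def E_def)
    show "\<forall>k<j. \<exists>q\<in>{0..1}. e (Suc k) \<le> q * e k + (1 - q) * E"
    proof (intro allI impI)
      fix k assume "k < j"
      then have "Suc k \<in> {1..N}" "k \<le> N" "Suc k \<le> N"
        using \<open>j \<le> N\<close> by auto
      then show "\<exists>q\<in>{0..1}. e (Suc k) \<le> q * e k + (1 - q) * E"
        unfolding e_def E_def
        using fitted_euler_local_error[OF assms(1-8), of "x k" "x (Suc k)" h "U (Suc k)" "U k"]
          mem incr step scheme by fastforce
    qed
  qed
  with \<open>j \<le> N\<close> show ?thesis
    by (simp add: e_def E_def)
qed

theorem theorem1:
  fixes T \<alpha> K C0 :: real
    and a f :: "real \<Rightarrow> real"
    and u :: "real \<Rightarrow> real \<Rightarrow> real"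
    and mesh :: "nat \<Rightarrow> nat \<Rightarrow> real"
    and U :: "real \<Rightarrow> nat \<Rightarrow> nat \<Rightarrow> real"
  assumes T_pos: "T > 0"
    and a_C1: "C1_on_interval 0 T a"
    and f_C1: "C1_on_interval 0 T f"
    and alpha_pos: "\<alpha> > 0"
    and a_ge: "\<forall>t\<in>{0..T}. a t \<ge> \<alpha>"
    and u_cont: "\<forall>\<epsilon>\<in>{0<..1}. continuous_on {0..T} (u \<epsilon>)"
    and u_ode: "\<forall>\<epsilon>\<in>{0<..1}. \<forall>t\<in>{0<..T}. \<exists>D.
                 (u \<epsilon> has_real_derivative D) (at t within {0..T})
                 \<and> \<epsilon> * D + a t * u \<epsilon> t = f t"
    and u_init: "\<forall>\<epsilon>\<in>{0<..1}. \<bar>u \<epsilon> 0\<bar> \<le> K"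
    and mesh_start: "\<forall>N\<ge>1. mesh N 0 = 0"
    and mesh_end: "\<forall>N\<ge>1. mesh N N = T"
    and mesh_incr: "\<forall>N\<ge>1. \<forall>j\<in>{1..N}. mesh N (j - 1) < mesh N j"
    and mesh_step: "\<forall>N\<ge>1. \<forall>j\<in>{1..N}. mesh N j - mesh N (j - 1) \<le> C0 / real N"
    and U_init: "\<forall>\<epsilon>\<in>{0<..1}. \<forall>N\<ge>1. U \<epsilon> N 0 = u \<epsilon> 0"
    and U_scheme: "\<forall>\<epsilon>\<in>{0<..1}. \<forall>N\<ge>1. \<forall>j\<in>{1..N}.
        (let h = mesh N j - mesh N (j - 1); aj = a (mesh N j) in
           \<epsilon> * fitted_sigma \<epsilon> aj h * (U \<epsilon> N j - U \<epsilon> N (j - 1)) / h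
             + aj * U \<epsilon> N j = f (mesh N j))"
  shows "\<exists>C. \<forall>N\<ge>1. \<forall>\<epsilon>\<in>{0<..1}. \<forall>j\<le>N.
           \<bar>U \<epsilon> N j - u \<epsilon> (mesh N j)\<bar> \<le> C / real N"
proof -
  obtain La where La: "La-lipschitz_on {0..T} a"
    using C1_on_interval_lipschitz_on[OF a_C1] .
  obtain Lf where Lf: "Lf-lipschitz_on {0..T} f"
    using C1_on_interval_lipschitz_on[OF f_C1] .
  obtain Mf where Mf: "\<forall>t\<in>{0..T}. \<bar>f t\<bar> \<le> Mf"
    using continuous_on_compact_bound[OF compact_Icc C1_on_interval_continuous_on[OF f_C1]]
    by (metis real_norm_def)
  define B where "B = max K (Mf / \<alpha>)"
  have u_le: "\<forall>t\<in>{0..T}. \<bar>u \<epsilon> t\<bar> \<le> B" if \<epsilon>: "\<epsilon> \<in> {0<..1}" for \<epsilon>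
    unfolding B_def
    by (intro ballI singular_ode_solution_abs_le[where y = "u \<epsilon>" and a = a and f = f
          and \<epsilon> = \<epsilon> and \<alpha> = \<alpha> and T = T])
      (use \<epsilon> alpha_pos T_pos a_ge u_cont u_ode u_init Mf in auto)
  show ?thesis
  proof (intro exI[of _ "(Lf + La * B) * C0 / \<alpha>"] allI impI ballI)
    fix N j :: nat and \<epsilon> :: real
    assume "1 \<le> N" and \<epsilon>: "\<epsilon> \<in> {0<..1}" and "j \<le> N"
    have "\<bar>U \<epsilon> N j - u \<epsilon> (mesh N j)\<bar> \<le> (Lf + La * B) * (C0 / real N) / \<alpha>"
      by (rule fitted_euler_error_bound[OF _ alpha_pos a_ge La Lf u_le[OF \<epsilon>] _ bspec[OF u_ode \<epsilon>]])
        (use \<open>1 \<le> N\<close> \<epsilon> \<open>j \<le> N\<close> u_cont mesh_start mesh_end mesh_incr mesh_step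
          U_init U_scheme in \<open>auto simp: Let_def\<close>)
    then show "\<bar>U \<epsilon> N j - u \<epsilon> (mesh N j)\<bar> \<le> (Lf + La * B) * C0 / \<alpha> / real N"
      by (simp add: ac_simps)
  qed
qed

end
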